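(* For every $f=\sum_{n\ge0}f_n\mathtt{x}^n\in\mathbb{K}[[\mathtt{x}]]$ and every $(\mu_{+},\sigma_{+})\in\mathbb{K}[[\mathtt{x}]]^{+}\times\mathfrak{M}^{+}$, the series $\sum_{n\ge0}f_n(\mu_{+},\sigma_{+})^{\rtimes n}$ converges in $\mathbb{K}[[\mathtt{x}]]\times\mathfrak{M}$.
   Context: $\mathbb{K}$ is a field of characteristic zero (discrete topology); $\mathbb{K}[[\mathtt{x}]]$ has the $(\mathtt{x})$-adic topology given by the order valuation $\nu$ ($\nu(0)=+\infty$); $\mathfrak{M}:=\mathtt{x}\mathbb{K}[[\mathtt{x}]]$ (subspace topology); $\mathbb{K}[[\mathtt{x}]]\times\mathfrak{M}$ carries the product topology and componentwise vector space structure. $\mathbb{K}[[\mathtt{x}]]^{+}:=\mathfrak{M}$ (series with zero constant term) and $\mathfrak{M}^{+}:=\{\sigma\in\mathfrak{M}:\nu(\sigma)>1\}$. For $g=\sum g_n\mathtt{x}^n$ and $\sigma\in\mathfrak{M}$, $g\circ\sigma:=\sum g_n\sigma^n$. Product: $(\mu_1,\sigma_1)\rtimes(\mu_2,\sigma_2):=((\mu_1\circ\sigma_2)\mu_2,\sigma_1\circ\sigma_2)$; $(\mu,\sigma)^{\rtimes0}:=(1,\mathtt{x})$ and $(\mu,\sigma)^{\rtimes n}$ is the $n$-fold $\rtimes$-product. *)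

theory Defs
  imports "HOL-Computational_Algebra.Formal_Power_Series" "HOL-Library.Product_Plus"
begin

definition rtimes :: "'a::field_char_0 fps \<times> 'a fps \<Rightarrow> 'a fps \<times> 'a fps \<Rightarrow> 'a fps \<times> 'a fps" where
  "rtimes p q = ((fst p oo snd q) * fst q, snd p oo snd q)"

primrec rtpow :: "'a::field_char_0 fps \<times> 'a fps \<Rightarrow> nat \<Rightarrow> 'a fps \<times> 'a fps" where
  "rtpow p 0 = (1, fps_X)"
| "rtpow p (Suc n) = rtimes p (rtpow p n)"

definition pscale :: "'a::field_char_0 \<Rightarrow> 'a fps \<times> 'a fps \<Rightarrow> 'a fps \<times> 'a fps" where
  "pscale c p = (fps_const c * fst p, fps_const c * snd p)"

end

theory Submission
  imports Defs
begin

text \<open>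
  Divisibility by \<open>X\<^sup>m\<close> measures the order of a power series. If \<open>\<nu>(\<mu>) \<ge> 1\<close> and
  \<open>\<nu>(\<sigma>) \<ge> 2\<close>, then \<open>(\<mu>, \<sigma>)\<^sup>\<rtimes>\<^sup>n = (\<mu>\<^sub>n, \<sigma>\<^sub>n)\<close> satisfies \<open>\<nu>(\<mu>\<^sub>n) \<ge> n\<close> and
  \<open>\<nu>(\<sigma>\<^sub>n) \<ge> n + 1\<close>, since composing with \<open>\<sigma>\<^sub>n\<close> multiplies orders by \<open>\<nu>(\<sigma>\<^sub>n)\<close>.
  So the terms of the series tend to zero in the \<open>X\<close>-adic topology, and each coefficient
  of the partial sums is eventually constant.
\<close>

lemma fps_X_power_dvd_iff:
  fixes g :: "'a::comm_ring_1 fps"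
  shows "fps_X ^ m dvd g \<longleftrightarrow> (\<forall>k<m. fps_nth g k = 0)"
proof
  assume "fps_X ^ m dvd g"
  then obtain h where "g = fps_X ^ m * h" by (rule dvdE)
  then show "\<forall>k<m. fps_nth g k = 0" by (simp add: fps_X_power_mult_nth)
next
  assume "\<forall>k<m. fps_nth g k = 0"
  then have "g = fps_X ^ m * fps_shift m g"
    by (intro fps_ext) (simp add: fps_X_power_mult_nth)
  then show "fps_X ^ m dvd g" by (metis dvd_triv_left)
qed

lemma fps_nth_eq_0_if_X_power_dvd:
  fixes g :: "'a::comm_ring_1 fps"
  shows "fps_X ^ m dvd g \<Longrightarrow> k < m \<Longrightarrow> fps_nth g k = 0"
  by (simp add: fps_X_power_dvd_iff)

lemma fps_compose_dvd_power:
  fixes a c :: "'a::idom fps"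
  assumes "fps_nth c 0 = 0" and "fps_X ^ m dvd a"
  shows "c ^ m dvd a oo c"
proof -
  obtain h where "a = fps_X ^ m * h" using assms(2) by (rule dvdE)
  then have "a oo c = c ^ m * (h oo c)"
    using assms(1) fps_compose_power[OF assms(1), of fps_X m]
    by (simp add: fps_compose_mult_distrib fps_X_fps_compose_startby0)
  then show ?thesis by simp
qed

lemma fps_X_power_dvd_rtpow:
  fixes \<mu> \<sigma> :: "'a::field_char_0 fps"
  assumes "fps_X dvd \<mu>" and "fps_X ^ 2 dvd \<sigma>"
  shows "fps_X ^ n dvd fst (rtpow (\<mu>, \<sigma>) n) \<and> fps_X ^ (n + 1) dvd snd (rtpow (\<mu>, \<sigma>) n)"
proof (induction n)
  case 0
  then show ?case by simp
next
  case (Suc n)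
  define r s where "r = fst (rtpow (\<mu>, \<sigma>) n)" and "s = snd (rtpow (\<mu>, \<sigma>) n)"
  have r: "fps_X ^ n dvd r" and s: "fps_X ^ (n + 1) dvd s"
    using Suc by (simp_all add: r_def s_def)
  have s0: "fps_nth s 0 = 0"
    using s by (rule fps_nth_eq_0_if_X_power_dvd) simp
  have "fps_X dvd \<mu> oo s"
    using fps_compose_dvd_power[OF s0, of 1 \<mu>] assms(1) s
    by (metis dvd_trans dvd_power power_one_right zero_less_Suc Suc_eq_plus1)
  then have "fps_X ^ Suc n dvd (\<mu> oo s) * r"
    using r by (simp add: mult_dvd_mono)
  moreover have "fps_X ^ (Suc n + 1) dvd \<sigma> oo s"
  proof -
    have "fps_X ^ (Suc n + 1) dvd (fps_X ^ (n + 1)) ^ 2"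
      unfolding power_mult[symmetric] by (rule le_imp_power_dvd) simp
    also have "\<dots> dvd s ^ 2"
      using s by (rule dvd_power_same)
    also have "s ^ 2 dvd \<sigma> oo s"
      by (rule fps_compose_dvd_power[OF s0 assms(2)])
    finally show ?thesis .
  qed
  ultimately show ?case
    by (simp add: rtimes_def r_def s_def)
qed

lemma sums_fps_of_increasing_order:
  fixes a :: "nat \<Rightarrow> 'a::comm_ring_1 fps"
  assumes "\<And>n. fps_X ^ n dvd a n"
  shows "a sums Abs_fps (\<lambda>k. \<Sum>n\<le>k. fps_nth (a n) k)"
  unfolding sums_def
proof (rule tendsto_fpsI)
  fix k
  have "fps_nth (\<Sum>n<N. a n) k = (\<Sum>n\<le>k. fps_nth (a n) k)" if "Suc k \<le> N" for N
  proof -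
    have "fps_nth (\<Sum>n<N. a n) k = (\<Sum>n<N. fps_nth (a n) k)" by (simp add: fps_sum_nth)
    also have "\<dots> = (\<Sum>n\<le>k. fps_nth (a n) k)"
      using that assms by (intro sum.mono_neutral_right) (auto simp: fps_X_power_dvd_iff)
    finally show ?thesis .
  qed
  then show "\<forall>\<^sub>F N in sequentially. fps_nth (\<Sum>n<N. a n) k = fps_nth (Abs_fps (\<lambda>k. \<Sum>n\<le>k. fps_nth (a n) k)) k"
    unfolding eventually_sequentially by auto
qed

lemma sums_Pair:
  fixes a :: "nat \<Rightarrow> 'a::{topological_space, comm_monoid_add}"
    and b :: "nat \<Rightarrow> 'b::{topological_space, comm_monoid_add}"
  assumes "a sums A" and "b sums B"
  shows "(\<lambda>n. (a n, b n)) sums (A, B)"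
proof -
  have "(\<Sum>n<N. (a n, b n)) = (\<Sum>n<N. a n, \<Sum>n<N. b n)" for N
    by (simp add: prod_eq_iff fst_sum snd_sum)
  then show ?thesis
    using assms unfolding sums_def by (simp add: tendsto_Pair)
qed

theorem mainTheorem9:
  fixes f \<mu> \<sigma> :: "'a::field_char_0 fps"
  assumes "fps_nth \<mu> 0 = 0"
    and "fps_nth \<sigma> 0 = 0" and "fps_nth \<sigma> 1 = 0"
  shows "\<exists>L. (\<lambda>n. pscale (fps_nth f n) (rtpow (\<mu>, \<sigma>) n)) sums L \<and> fps_nth (snd L) 0 = 0"
proof -
  define x where "x n = fps_const (fps_nth f n) * fst (rtpow (\<mu>, \<sigma>) n)" for n
  define y where "y n = fps_const (fps_nth f n) * snd (rtpow (\<mu>, \<sigma>) n)" for n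
  have "fps_X dvd \<mu>" and "fps_X ^ 2 dvd \<sigma>"
    using assms by (auto simp: fps_X_power_dvd_iff[of 1, simplified] fps_X_power_dvd_iff
        less_2_cases_iff)
  then have x: "fps_X ^ n dvd x n" and y: "fps_X ^ (n + 1) dvd y n" for n
    unfolding x_def y_def using fps_X_power_dvd_rtpow by (auto intro: dvd_mult)
  define A B where "A = Abs_fps (\<lambda>k. \<Sum>n\<le>k. fps_nth (x n) k)"
    and "B = Abs_fps (\<lambda>k. \<Sum>n\<le>k. fps_nth (y n) k)"
  have "fps_X ^ n dvd y n" for n
    using y by (meson dvd_trans le_add1 le_imp_power_dvd)
  then have "(\<lambda>n. (x n, y n)) sums (A, B)"
    unfolding A_def B_def using x by (intro sums_Pair sums_fps_of_increasing_order)
  moreover have "fps_nth B 0 = 0"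
    using fps_nth_eq_0_if_X_power_dvd[OF y[of 0]] by (simp add: B_def)
  ultimately show ?thesis
    by (auto simp: pscale_def x_def y_def)
qed

end
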